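(* Let $\mathcal{K}^+$ be the fragment of the positive logic $\mathcal{V}^+$ whose formulas are generated only by the rules: $\{n\}\in VF(\mathbf{N})$; $(V\mapsto\Phi)\in VF(\tau\to\tau')$ for $V\in\mathit{Val}(\tau)$ and $\Phi$ a computation formula of $\mathcal{K}^+$ of type $\tau'$; $o\,\phi$ a computation formula for $o\in\mathcal{O}$ and $\phi$ a value formula of $\mathcal{K}^+$; and closure of value formulas (only) under arbitrary $\bigvee$ and $\bigwedge$ (so computation formulas are exactly the formulas $o\,\phi$). Then the induced logical preorder $\sqsubseteq_{\mathcal{K}^+}$ coincides with $\sqsubseteq_{\mathcal{V}^+}$.
   Context: Language: simply typed call-by-value language with types $\tau ::= \mathbf{1}\mid\mathbf{N}\mid\tau\to\tau'$, values $*, Z, S(V), \lambda x{:}\tau.M, x$, computations $VW$, $\mathbf{return}\,V$, $\mathbf{let}\,M\Rightarrow x\,\mathbf{in}\,N$, $\mathbf{fix}(V)$, case on naturals, and effect operations from a signature $\Sigma$. $\mathit{Val}(\tau)$, $\mathit{Com}(\tau)$: closed values/computations; $\overline{n}=S^n(Z)$. Each $M\in\mathit{Com}(\tau)$ has an operational effect tree $|M|\in T(\mathit{Val}(\tau))$, where $TX$ is the set of possibly infinite trees with leaves $\bot$ or in $X$ and internal nodes labelled by effect operations. A set $\mathcal{O}$ of modalities is given with $[\![o]\!]\subseteq T\mathbf{1}$; $t[\in P]$ replaces leaves in $P$ by $*$ and other value leaves by $\bot$. Logic $\mathcal{V}^+$: value formulas $VF(\tau)$, computation formulas $CF(\tau)$: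 $\{n\}\in VF(\mathbf{N})$; $(V\mapsto\Phi)\in VF(\tau\to\tau')$ for $V\in\mathit{Val}(\tau)$, $\Phi\in CF(\tau')$; $o\phi\in CF(\tau)$; both closed under arbitrary $\bigwedge,\bigvee$ (no negation). $W\models\{n\}$ iff $W=\overline{n}$; $W\models(V\mapsto\Phi)$ iff $WV\models\Phi$; $M\models o\phi$ iff $|M|[\in\{V\mid V\models\phi\}]\in[\![o]\!]$. For a fragment $\mathcal{L}$, $A\sqsubseteq_{\mathcal{L}}B$ (same type and aspect) iff every formula of $\mathcal{L}$ satisfied by $A$ is satisfied by $B$. *)

theory Defs
  imports Main "HOL-Library.Extended_Nat"
begin

datatype ty = Unit | Nat | Arr ty ty

text \<open>Binders: Lam binds index 0 in its body;
  Let M N binds index 0 in N; Case V M N binds the predecessor (index 0) in N;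
  Op sigma V M binds index 0 (of type N, the branch index) in M.\<close>
datatype 'op val = Star | Zero | Succ "'op val" | Lam ty "'op comp" | Var nat
and 'op comp = App "'op val" "'op val" | Ret "'op val" | Let "'op comp" "'op comp"
  | Fix "'op val" | Case "'op val" "'op comp" "'op comp" | Op 'op "'op val" "'op comp"

primrec num :: "nat \<Rightarrow> 'op val" where
  "num 0 = Zero"
| "num (Suc n) = Succ (num n)"

inductive vtyp :: "('op \<Rightarrow> ty) \<Rightarrow> ty list \<Rightarrow> 'op val \<Rightarrow> ty \<Rightarrow> bool"
  and ctyp :: "('op \<Rightarrow> ty) \<Rightarrow> ty list \<Rightarrow> 'op comp \<Rightarrow> ty \<Rightarrow> bool"
  for par :: "'op \<Rightarrow> ty" where
  "vtyp par \<Gamma> Star Unit"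
| "vtyp par \<Gamma> Zero Nat"
| "vtyp par \<Gamma> V Nat \<Longrightarrow> vtyp par \<Gamma> (Succ V) Nat"
| "ctyp par (\<tau> # \<Gamma>) M \<tau>' \<Longrightarrow> vtyp par \<Gamma> (Lam \<tau> M) (Arr \<tau> \<tau>')"
| "i < length \<Gamma> \<Longrightarrow> vtyp par \<Gamma> (Var i) (\<Gamma> ! i)"
| "vtyp par \<Gamma> V (Arr \<tau> \<tau>') \<Longrightarrow> vtyp par \<Gamma> W \<tau> \<Longrightarrow> ctyp par \<Gamma> (App V W) \<tau>'"
| "vtyp par \<Gamma> V \<tau> \<Longrightarrow> ctyp par \<Gamma> (Ret V) \<tau>"
| "ctyp par \<Gamma> M \<tau> \<Longrightarrow> ctyp par (\<tau> # \<Gamma>) N \<tau>' \<Longrightarrow> ctyp par \<Gamma> (Let M N) \<tau>'"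
| "vtyp par \<Gamma> F (Arr (Arr \<tau> \<tau>') (Arr \<tau> \<tau>')) \<Longrightarrow> ctyp par \<Gamma> (Fix F) (Arr \<tau> \<tau>')"
| "vtyp par \<Gamma> V Nat \<Longrightarrow> ctyp par \<Gamma> M \<tau> \<Longrightarrow> ctyp par (Nat # \<Gamma>) N \<tau> \<Longrightarrow> ctyp par \<Gamma> (Case V M N) \<tau>"
| "vtyp par \<Gamma> V (par \<sigma>) \<Longrightarrow> ctyp par (Nat # \<Gamma>) M \<tau> \<Longrightarrow> ctyp par \<Gamma> (Op \<sigma> V M) \<tau>"

definition Val :: "('op \<Rightarrow> ty) \<Rightarrow> ty \<Rightarrow> 'op val set" where
  "Val par \<tau> = {V. vtyp par [] V \<tau>}"
definition Com :: "('op \<Rightarrow> ty) \<Rightarrow> ty \<Rightarrow> 'op comp set" where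
  "Com par \<tau> = {M. ctyp par [] M \<tau>}"

section \<open>Substitution of a closed value for index k\<close>

primrec vsubst :: "nat \<Rightarrow> 'op val \<Rightarrow> 'op val \<Rightarrow> 'op val"
  and csubst :: "nat \<Rightarrow> 'op val \<Rightarrow> 'op comp \<Rightarrow> 'op comp" where
  "vsubst k W Star = Star"
| "vsubst k W Zero = Zero"
| "vsubst k W (Succ V) = Succ (vsubst k W V)"
| "vsubst k W (Lam \<tau> M) = Lam \<tau> (csubst (Suc k) W M)"
| "vsubst k W (Var i) = (if i = k then W else if k < i then Var (i - 1) else Var i)"
| "csubst k W (App V V') = App (vsubst k W V) (vsubst k W V')"
| "csubst k W (Ret V) = Ret (vsubst k W V)"
| "csubst k W (Let M N) = Let (csubst k W M) (csubst (Suc k) W N)"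
| "csubst k W (Fix V) = Fix (vsubst k W V)"
| "csubst k W (Case V M N) = Case (vsubst k W V) (csubst k W M) (csubst (Suc k) W N)"
| "csubst k W (Op \<sigma> V M) = Op \<sigma> (vsubst k W V) (csubst (Suc k) W M)"

inductive step :: "'op comp \<Rightarrow> 'op comp \<Rightarrow> bool" where
  beta: "step (App (Lam \<tau> M) W) (csubst 0 W M)"
| let_ret: "step (Let (Ret V) N) (csubst 0 V N)"
| let_cong: "step M M' \<Longrightarrow> step (Let M N) (Let M' N)"
| let_op: "step (Let (Op \<sigma> V M) N) (Op \<sigma> V (Let M N))"
| fix_unfold: "step (Fix (Lam (Arr \<tau> \<tau>') B))
          (App (Lam (Arr \<tau> \<tau>') B)
               (Lam \<tau> (Let (Fix (Lam (Arr \<tau> \<tau>') B)) (App (Var 0) (Var 1)))))"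
| case_zero: "step (Case Zero M N) M"
| case_succ: "step (Case (Succ V) M N) (csubst 0 V N)"

definition terminal :: "'op comp \<Rightarrow> bool" where
  "terminal M \<longleftrightarrow> (\<exists>V. M = Ret V) \<or> (\<exists>\<sigma> V N. M = Op \<sigma> V N)"

definition nf :: "'op comp \<Rightarrow> 'op comp" where
  "nf M = (THE T. step\<^sup>*\<^sup>* M T \<and> terminal T)"

text \<open>Possibly infinite trees; leaves are Bot or Leaf x; internal nodes are labelled by
  an operation together with its (closed) parameter value, with children indexed by nat
  (children at indices beyond the arity are Bot).\<close>
codatatype ('a, 'op) tree = Bot | Leaf 'a | Node 'op "'op val" "nat \<Rightarrow> ('a, 'op) tree"

fun ret_val :: "'op comp \<Rightarrow> 'op val option" where
  "ret_val (Ret V) = Some V"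
| "ret_val _ = None"

fun op_parts :: "'op comp \<Rightarrow> ('op \<times> 'op val \<times> 'op comp) option" where
  "op_parts (Op \<sigma> V N) = Some (\<sigma>, V, N)"
| "op_parts _ = None"

primcorec eff :: "('op \<Rightarrow> enat) \<Rightarrow> 'op comp \<Rightarrow> ('op val, 'op) tree" where
  "eff ar M =
     (if (\<exists>T. step\<^sup>*\<^sup>* M T \<and> terminal T) \<and> ret_val (nf M) \<noteq> None then
        Leaf (the (ret_val (nf M)))
      else if (\<exists>T. step\<^sup>*\<^sup>* M T \<and> terminal T) \<and> op_parts (nf M) \<noteq> None then
        Node (fst (the (op_parts (nf M)))) (fst (snd (the (op_parts (nf M)))))
          (\<lambda>k. if enat k < ar (fst (the (op_parts (nf M))))
               then eff ar (csubst 0 (num k) (snd (snd (the (op_parts (nf M))))))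
               else Bot)
      else Bot)"

primcorec restr :: "'a set \<Rightarrow> ('a, 'op) tree \<Rightarrow> (unit, 'op) tree" where
  "restr P t = (case t of
      Bot \<Rightarrow> Bot
    | Leaf x \<Rightarrow> (if x \<in> P then Leaf () else Bot)
    | Node \<sigma> v f \<Rightarrow> Node \<sigma> v (\<lambda>k. restr P (f k)))"


text \<open>Infinitary formulas are represented by their extensions (the set of closed terms
  satisfying them): vplus ... \<tau> D holds iff D = {V \<in> Val(\<tau>). V \<Turnstile> \<phi>} for some value formula
  \<phi> \<in> VF(\<tau>) of V+, and cplus ... \<tau> D iff D = {M \<in> Com(\<tau>). M \<Turnstile> \<Phi>} for some \<Phi> \<in> CF(\<tau>).
  Parameters: par (operation parameter types), ar (operation arities), Os (the set of
  modalities), sem (the interpretation [[o]] \<subseteq> T 1).\<close>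

inductive vplus :: "('op \<Rightarrow> ty) \<Rightarrow> ('op \<Rightarrow> enat) \<Rightarrow> 'm set \<Rightarrow> ('m \<Rightarrow> (unit, 'op) tree set)
      \<Rightarrow> ty \<Rightarrow> 'op val set \<Rightarrow> bool"
  and cplus :: "('op \<Rightarrow> ty) \<Rightarrow> ('op \<Rightarrow> enat) \<Rightarrow> 'm set \<Rightarrow> ('m \<Rightarrow> (unit, 'op) tree set)
      \<Rightarrow> ty \<Rightarrow> 'op comp set \<Rightarrow> bool"
  for par ar Os sem where
  vp_num: "vplus par ar Os sem Nat {num n}"
| vp_map: "V \<in> Val par \<tau> \<Longrightarrow> cplus par ar Os sem \<tau>' C \<Longrightarrow>
     vplus par ar Os sem (Arr \<tau> \<tau>') {W \<in> Val par (Arr \<tau> \<tau>'). App W V \<in> C}"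
| vp_and: "\<forall>D\<in>S. vplus par ar Os sem \<tau> D \<Longrightarrow> vplus par ar Os sem \<tau> (Val par \<tau> \<inter> \<Inter>S)"
| vp_or: "\<forall>D\<in>S. vplus par ar Os sem \<tau> D \<Longrightarrow> vplus par ar Os sem \<tau> (\<Union>S)"
| cp_mod: "mo \<in> Os \<Longrightarrow> vplus par ar Os sem \<tau> D \<Longrightarrow>
     cplus par ar Os sem \<tau> {M \<in> Com par \<tau>. restr D (eff ar M) \<in> sem mo}"
| cp_and: "\<forall>C\<in>S. cplus par ar Os sem \<tau> C \<Longrightarrow> cplus par ar Os sem \<tau> (Com par \<tau> \<inter> \<Inter>S)"
| cp_or: "\<forall>C\<in>S. cplus par ar Os sem \<tau> C \<Longrightarrow> cplus par ar Os sem \<tau> (\<Union>S)"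

inductive kval :: "('op \<Rightarrow> ty) \<Rightarrow> ('op \<Rightarrow> enat) \<Rightarrow> 'm set \<Rightarrow> ('m \<Rightarrow> (unit, 'op) tree set)
      \<Rightarrow> ty \<Rightarrow> 'op val set \<Rightarrow> bool"
  and kcom :: "('op \<Rightarrow> ty) \<Rightarrow> ('op \<Rightarrow> enat) \<Rightarrow> 'm set \<Rightarrow> ('m \<Rightarrow> (unit, 'op) tree set)
      \<Rightarrow> ty \<Rightarrow> 'op comp set \<Rightarrow> bool"
  for par ar Os sem where
  kv_num: "kval par ar Os sem Nat {num n}"
| kv_map: "V \<in> Val par \<tau> \<Longrightarrow> kcom par ar Os sem \<tau>' C \<Longrightarrow>
     kval par ar Os sem (Arr \<tau> \<tau>') {W \<in> Val par (Arr \<tau> \<tau>'). App W V \<in> C}"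
| kv_and: "\<forall>D\<in>S. kval par ar Os sem \<tau> D \<Longrightarrow> kval par ar Os sem \<tau> (Val par \<tau> \<inter> \<Inter>S)"
| kv_or: "\<forall>D\<in>S. kval par ar Os sem \<tau> D \<Longrightarrow> kval par ar Os sem \<tau> (\<Union>S)"
| kc_mod: "mo \<in> Os \<Longrightarrow> kval par ar Os sem \<tau> D \<Longrightarrow>
     kcom par ar Os sem \<tau> {M \<in> Com par \<tau>. restr D (eff ar M) \<in> sem mo}"

definition lpre :: "(ty \<Rightarrow> 'x set \<Rightarrow> bool) \<Rightarrow> ty \<Rightarrow> 'x \<Rightarrow> 'x \<Rightarrow> bool" where
  "lpre L \<tau> A B \<longleftrightarrow> (\<forall>D. L \<tau> D \<longrightarrow> A \<in> D \<longrightarrow> B \<in> D)"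

end

theory Submission
  imports Defs
begin

text \<open>Every formula of \<open>\<K>\<^sup>+\<close> is one of \<open>\<V>\<^sup>+\<close>, so \<open>\<sqsubseteq>\<^sub>\<V>\<^sub>+\<close> implies \<open>\<sqsubseteq>\<^sub>\<K>\<^sub>+\<close>.
  Conversely, every formula of \<open>\<V>\<^sup>+\<close> is upward closed for \<open>\<sqsubseteq>\<^sub>\<K>\<^sub>+\<close>, by induction on formulas.
  The case \<open>V \<mapsto> \<Phi>\<close> uses that \<open>\<sqsubseteq>\<^sub>\<K>\<^sub>+\<close> is preserved by application to a fixed argument.
  The case \<open>o \<phi>\<close> uses that an upward closed set of values is the union, over its elements \<open>V\<close>,
  of the conjunction of all \<open>\<K>\<^sup>+\<close> value formulas satisfied by \<open>V\<close>; since \<open>\<K>\<^sup>+\<close> has arbitrary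
  conjunctions and disjunctions of value formulas, \<open>\<phi>\<close> is thus equivalent to a \<open>\<K>\<^sup>+\<close> formula,
  and so is \<open>o \<phi>\<close>.\<close>

definition up_closed :: "(ty \<Rightarrow> 'x set \<Rightarrow> bool) \<Rightarrow> ty \<Rightarrow> 'x set \<Rightarrow> 'x set \<Rightarrow> bool" where
  "up_closed L \<tau> U D \<longleftrightarrow> (\<forall>A\<in>D. \<forall>B\<in>U. lpre L \<tau> A B \<longrightarrow> B \<in> D)"

lemma lpre_antimono:
  assumes "lpre L' \<tau> A B" and "\<And>D. L \<tau> D \<Longrightarrow> L' \<tau> D"
  shows "lpre L \<tau> A B"
  using assms unfolding lpre_def by blast

lemma lpre_if_up_closed:
  assumes "B \<in> U" and "lpre L \<tau> A B" and "\<And>D. L' \<tau> D \<Longrightarrow> up_closed L \<tau> U D"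
  shows "lpre L' \<tau> A B"
  using assms unfolding lpre_def up_closed_def by blast

lemma num_in_Val: "num n \<in> Val par Nat"
  unfolding Val_def by (induction n) (auto intro: vtyp_ctyp.intros)

lemma App_in_Com:
  assumes "W \<in> Val par (Arr \<tau> \<tau>')" and "V \<in> Val par \<tau>"
  shows "App W V \<in> Com par \<tau>'"
  using assms unfolding Val_def Com_def by (auto intro: vtyp_ctyp.intros)

lemma kval_imp_vplus: "kval par ar Os sem \<tau> D \<Longrightarrow> vplus par ar Os sem \<tau> D"
  and kcom_imp_cplus: "kcom par ar Os sem \<tau>' C \<Longrightarrow> cplus par ar Os sem \<tau>' C"
  by (induction rule: kval_kcom.inducts) (auto intro: vplus_cplus.intros)

lemma vplus_subset_Val: "vplus par ar Os sem \<tau> D \<Longrightarrow> D \<subseteq> Val par \<tau>"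
  and cplus_subset_Com: "cplus par ar Os sem \<tau>' C \<Longrightarrow> C \<subseteq> Com par \<tau>'"
  by (induction rule: vplus_cplus.inducts) (auto simp: num_in_Val)

lemma lpre_kcom_App:
  assumes "lpre (kval par ar Os sem) (Arr \<tau> \<tau>') A B"
    and "A \<in> Val par (Arr \<tau> \<tau>')" and "V \<in> Val par \<tau>"
  shows "lpre (kcom par ar Os sem) \<tau>' (App A V) (App B V)"
  unfolding lpre_def
proof (intro allI impI)
  fix C assume "kcom par ar Os sem \<tau>' C" and "App A V \<in> C"
  have "kval par ar Os sem (Arr \<tau> \<tau>') {W \<in> Val par (Arr \<tau> \<tau>'). App W V \<in> C}"
    using \<open>V \<in> Val par \<tau>\<close> \<open>kcom par ar Os sem \<tau>' C\<close> by (rule kv_map)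
  then show "App B V \<in> C"
    using assms(1,2) \<open>App A V \<in> C\<close> unfolding lpre_def by blast
qed

lemma kval_if_up_closed:
  assumes "D \<subseteq> Val par \<tau>" and "up_closed (kval par ar Os sem) \<tau> (Val par \<tau>) D"
  shows "kval par ar Os sem \<tau> D"
proof -
  let ?cone = "\<lambda>V. Val par \<tau> \<inter> \<Inter>{E. kval par ar Os sem \<tau> E \<and> V \<in> E}"
  have "kval par ar Os sem \<tau> (\<Union>V\<in>D. ?cone V)"
    by (rule kv_or) (auto intro: kv_and)
  moreover have "(\<Union>V\<in>D. ?cone V) = D"
    using assms unfolding up_closed_def lpre_def by blast
  ultimately show ?thesis by simp
qed

lemma vplus_up_closed:
    "vplus par ar Os sem \<tau> D \<Longrightarrow> up_closed (kval par ar Os sem) \<tau> (Val par \<tau>) D"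
  and cplus_up_closed:
    "cplus par ar Os sem \<tau>' C \<Longrightarrow> up_closed (kcom par ar Os sem) \<tau>' (Com par \<tau>') C"
proof (induction rule: vplus_cplus.inducts)
  case (vp_num n)
  then show ?case unfolding up_closed_def lpre_def by (blast intro: kv_num)
next
  case (vp_map V \<tau> \<tau>' C)
  show ?case unfolding up_closed_def
  proof (intro ballI impI)
    fix A B assume A: "A \<in> {W \<in> Val par (Arr \<tau> \<tau>'). App W V \<in> C}"
      and "B \<in> Val par (Arr \<tau> \<tau>')" and "lpre (kval par ar Os sem) (Arr \<tau> \<tau>') A B"
    then have "lpre (kcom par ar Os sem) \<tau>' (App A V) (App B V)"
      using \<open>V \<in> Val par \<tau>\<close> by (blast intro: lpre_kcom_App)
    moreover have "App B V \<in> Com par \<tau>'"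
      using \<open>B \<in> Val par (Arr \<tau> \<tau>')\<close> \<open>V \<in> Val par \<tau>\<close> by (rule App_in_Com)
    ultimately show "B \<in> {W \<in> Val par (Arr \<tau> \<tau>'). App W V \<in> C}"
      using A vp_map.IH \<open>B \<in> Val par (Arr \<tau> \<tau>')\<close> unfolding up_closed_def by blast
  qed
next
  case (cp_mod mo \<tau> D)
  then have "kval par ar Os sem \<tau> D"
    by (intro kval_if_up_closed vplus_subset_Val)
  with \<open>mo \<in> Os\<close> have "kcom par ar Os sem \<tau> {M \<in> Com par \<tau>. restr D (eff ar M) \<in> sem mo}"
    by (rule kc_mod)
  then show ?case unfolding up_closed_def lpre_def by blast
qed (auto simp: up_closed_def)

theorem proposition4p6:
  fixes par :: "'op \<Rightarrow> ty" and ar :: "'op \<Rightarrow> enat"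
    and Os :: "'m set" and sem :: "'m \<Rightarrow> (unit, 'op) tree set"
  assumes "\<forall>\<sigma>. par \<sigma> = Unit \<or> par \<sigma> = Nat"
  shows "(\<forall>\<tau> V W. V \<in> Val par \<tau> \<longrightarrow> W \<in> Val par \<tau> \<longrightarrow>
            (lpre (kval par ar Os sem) \<tau> V W \<longleftrightarrow> lpre (vplus par ar Os sem) \<tau> V W))
       \<and> (\<forall>\<tau> M N. M \<in> Com par \<tau> \<longrightarrow> N \<in> Com par \<tau> \<longrightarrow>
            (lpre (kcom par ar Os sem) \<tau> M N \<longleftrightarrow> lpre (cplus par ar Os sem) \<tau> M N))"
proof (intro conjI allI impI iffI)
  fix \<tau> V W assume "W \<in> Val par \<tau>" "lpre (kval par ar Os sem) \<tau> V W"
  then show "lpre (vplus par ar Os sem) \<tau> V W"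
    by (rule lpre_if_up_closed[where L'="vplus par ar Os sem"]) (rule vplus_up_closed)
next
  fix \<tau> M N assume "N \<in> Com par \<tau>" "lpre (kcom par ar Os sem) \<tau> M N"
  then show "lpre (cplus par ar Os sem) \<tau> M N"
    by (rule lpre_if_up_closed[where L'="cplus par ar Os sem"]) (rule cplus_up_closed)
next
  fix \<tau> V W assume "lpre (vplus par ar Os sem) \<tau> V W"
  then show "lpre (kval par ar Os sem) \<tau> V W"
    by (rule lpre_antimono[where L'="vplus par ar Os sem"]) (rule kval_imp_vplus)
next
  fix \<tau> M N assume "lpre (cplus par ar Os sem) \<tau> M N"
  then show "lpre (kcom par ar Os sem) \<tau> M N"
    by (rule lpre_antimono[where L'="cplus par ar Os sem"]) (rule kcom_imp_cplus)
qed

end
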